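(* Let $\mathfrak g$ be a nonsemisimple complex Lie algebra, $\mathfrak p$ a solvable nonperfect ideal of $\mathfrak g$, and $V$ an irreducible $\mathfrak g$-module. Then the following are equivalent: (1) $V$ is a locally finite $\mathfrak p$-module (every $v\in V$ lies in a finite-dimensional $\mathfrak p$-submodule); (2) $V$ is a quasi-Whittaker module for $\mathfrak g$, i.e., there exist a Lie algebra homomorphism $\phi:\mathfrak p\to\mathbb C$ and a vector $v\in V$ with $pv=\phi(p)v$ for all $p\in\mathfrak p$ that generates $V$ as a $\mathfrak g$-module.
   Context: A Lie algebra homomorphism $\phi:\mathfrak p\to\mathbb C$ is a linear map vanishing on $[\mathfrak p,\mathfrak p]$. A vector $v$ with $pv=\phi(p)v$ for all $p\in\mathfrak p$ is called a quasi-Whittaker vector of type $\phi$, and a module generated by such a vector a quasi-Whittaker module of type $\phi$. *)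

theory Defs
  imports Complex_Main
begin

definition fin_dim_subspace :: "(complex \<Rightarrow> 'a::ab_group_add \<Rightarrow> 'a) \<Rightarrow> 'a set \<Rightarrow> bool" where
  "fin_dim_subspace sc W \<longleftrightarrow> (\<exists>B. finite B \<and> B \<subseteq> W \<and> module.span sc B = W)"

definition lie_algebra :: "(complex \<Rightarrow> 'g::ab_group_add \<Rightarrow> 'g) \<Rightarrow> ('g \<Rightarrow> 'g \<Rightarrow> 'g) \<Rightarrow> bool" where
  "lie_algebra sg br \<longleftrightarrow> vector_space sg \<and>
     (\<forall>a b x y z. br (sg a x + sg b y) z = sg a (br x z) + sg b (br y z)) \<and>
     (\<forall>a b x y z. br z (sg a x + sg b y) = sg a (br z x) + sg b (br z y)) \<and>
     (\<forall>x. br x x = 0) \<and>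
     (\<forall>x y z. br x (br y z) + br y (br z x) + br z (br x y) = 0)"

definition lie_ideal :: "(complex \<Rightarrow> 'g::ab_group_add \<Rightarrow> 'g) \<Rightarrow> ('g \<Rightarrow> 'g \<Rightarrow> 'g) \<Rightarrow> 'g set \<Rightarrow> bool" where
  "lie_ideal sg br I \<longleftrightarrow> module.subspace sg I \<and> (\<forall>x y. y \<in> I \<longrightarrow> br x y \<in> I)"

definition derived :: "(complex \<Rightarrow> 'g::ab_group_add \<Rightarrow> 'g) \<Rightarrow> ('g \<Rightarrow> 'g \<Rightarrow> 'g) \<Rightarrow> 'g set \<Rightarrow> 'g set" where
  "derived sg br I = module.span sg {br a b | a b. a \<in> I \<and> b \<in> I}"

fun derived_series :: "(complex \<Rightarrow> 'g::ab_group_add \<Rightarrow> 'g) \<Rightarrow> ('g \<Rightarrow> 'g \<Rightarrow> 'g) \<Rightarrow> 'g set \<Rightarrow> nat \<Rightarrow> 'g set" where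
  "derived_series sg br I 0 = I"
| "derived_series sg br I (Suc n) = derived sg br (derived_series sg br I n)"

definition solvable :: "(complex \<Rightarrow> 'g::ab_group_add \<Rightarrow> 'g) \<Rightarrow> ('g \<Rightarrow> 'g \<Rightarrow> 'g) \<Rightarrow> 'g set \<Rightarrow> bool" where
  "solvable sg br I \<longleftrightarrow> (\<exists>n. derived_series sg br I n = {0})"

definition perfect :: "(complex \<Rightarrow> 'g::ab_group_add \<Rightarrow> 'g) \<Rightarrow> ('g \<Rightarrow> 'g \<Rightarrow> 'g) \<Rightarrow> 'g set \<Rightarrow> bool" where
  "perfect sg br I \<longleftrightarrow> derived sg br I = I"

definition semisimple :: "(complex \<Rightarrow> 'g::ab_group_add \<Rightarrow> 'g) \<Rightarrow> ('g \<Rightarrow> 'g \<Rightarrow> 'g) \<Rightarrow> bool" where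
  "semisimple sg br \<longleftrightarrow> (UNIV :: 'g set) \<noteq> {0} \<and>
     (\<forall>I. lie_ideal sg br I \<and> solvable sg br I \<longrightarrow> I = {0})"

definition lie_module ::
  "(complex \<Rightarrow> 'g::ab_group_add \<Rightarrow> 'g) \<Rightarrow> ('g \<Rightarrow> 'g \<Rightarrow> 'g) \<Rightarrow>
   (complex \<Rightarrow> 'v::ab_group_add \<Rightarrow> 'v) \<Rightarrow> ('g \<Rightarrow> 'v \<Rightarrow> 'v) \<Rightarrow> bool" where
  "lie_module sg br sv act \<longleftrightarrow> vector_space sv \<and>
     (\<forall>a b x y v. act (sg a x + sg b y) v = sv a (act x v) + sv b (act y v)) \<and>
     (\<forall>a b x v w. act x (sv a v + sv b w) = sv a (act x v) + sv b (act x w)) \<and>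
     (\<forall>x y v. act (br x y) v = act x (act y v) - act y (act x v))"

text \<open>W is a P-submodule (P = UNIV: a g-submodule).\<close>
definition submodule ::
  "(complex \<Rightarrow> 'v::ab_group_add \<Rightarrow> 'v) \<Rightarrow> ('g \<Rightarrow> 'v \<Rightarrow> 'v) \<Rightarrow> 'g set \<Rightarrow> 'v set \<Rightarrow> bool" where
  "submodule sv act P W \<longleftrightarrow> module.subspace sv W \<and> (\<forall>x\<in>P. \<forall>w\<in>W. act x w \<in> W)"

definition irreducible_module ::
  "(complex \<Rightarrow> 'v::ab_group_add \<Rightarrow> 'v) \<Rightarrow> ('g \<Rightarrow> 'v \<Rightarrow> 'v) \<Rightarrow> bool" where
  "irreducible_module sv act \<longleftrightarrow> (UNIV :: 'v set) \<noteq> {0} \<and>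
     (\<forall>W. submodule sv act UNIV W \<longrightarrow> W = {0} \<or> W = UNIV)"

definition locally_finite ::
  "(complex \<Rightarrow> 'v::ab_group_add \<Rightarrow> 'v) \<Rightarrow> ('g \<Rightarrow> 'v \<Rightarrow> 'v) \<Rightarrow> 'g set \<Rightarrow> bool" where
  "locally_finite sv act P \<longleftrightarrow>
     (\<forall>v. \<exists>W. v \<in> W \<and> submodule sv act P W \<and> fin_dim_subspace sv W)"

definition lie_hom_to_C ::
  "(complex \<Rightarrow> 'g::ab_group_add \<Rightarrow> 'g) \<Rightarrow> ('g \<Rightarrow> 'g \<Rightarrow> 'g) \<Rightarrow> 'g set \<Rightarrow> ('g \<Rightarrow> complex) \<Rightarrow> bool" where
  "lie_hom_to_C sg br P \<phi> \<longleftrightarrow>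
     (\<forall>a b x y. x \<in> P \<longrightarrow> y \<in> P \<longrightarrow> \<phi> (sg a x + sg b y) = a * \<phi> x + b * \<phi> y) \<and>
     (\<forall>x\<in>derived sg br P. \<phi> x = 0)"

definition quasi_whittaker_vector ::
  "(complex \<Rightarrow> 'v::ab_group_add \<Rightarrow> 'v) \<Rightarrow> ('g \<Rightarrow> 'v \<Rightarrow> 'v) \<Rightarrow> 'g set \<Rightarrow> ('g \<Rightarrow> complex) \<Rightarrow> 'v \<Rightarrow> bool" where
  "quasi_whittaker_vector sv act P \<phi> v \<longleftrightarrow> (\<forall>p\<in>P. act p v = sv (\<phi> p) v)"

definition generates ::
  "(complex \<Rightarrow> 'v::ab_group_add \<Rightarrow> 'v) \<Rightarrow> ('g \<Rightarrow> 'v \<Rightarrow> 'v) \<Rightarrow> 'v \<Rightarrow> bool" where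
  "generates sv act v \<longleftrightarrow> (\<forall>W. submodule sv act UNIV W \<and> v \<in> W \<longrightarrow> W = UNIV)"

definition quasi_whittaker_module ::
  "(complex \<Rightarrow> 'g::ab_group_add \<Rightarrow> 'g) \<Rightarrow> ('g \<Rightarrow> 'g \<Rightarrow> 'g) \<Rightarrow>
   (complex \<Rightarrow> 'v::ab_group_add \<Rightarrow> 'v) \<Rightarrow> ('g \<Rightarrow> 'v \<Rightarrow> 'v) \<Rightarrow> 'g set \<Rightarrow> bool" where
  "quasi_whittaker_module sg br sv act P \<longleftrightarrow>
     (\<exists>\<phi> v. lie_hom_to_C sg br P \<phi> \<and> quasi_whittaker_vector sv act P \<phi> v \<and> generates sv act v)"

end

theory Submission
  imports Defs "HOL-Computational_Algebra.Fundamental_Theorem_Algebra"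
begin

(* (2) implies (1): if v is a quasi-Whittaker vector and B spans g, the spans of the vectors
   b1 ... bm v with bi in B and m <= n are finite-dimensional and exhaust V, since v generates V.
   They are p-stable because p b = b p + [p, b] with [p, b] in p, and p acts on v by scalars.

   (1) implies (2): a nonzero finite-dimensional p-submodule contains, by Lie's theorem for the
   solvable algebra p, a common eigenvector v. Its eigenvalues form a character of p, since
   [x, y] acts on v by xy - yx = 0, and v generates V by irreducibility. Lie's theorem rests on
   eigenvalues existing over the complex numbers and on traces of commutators vanishing in
   characteristic zero (Dynkin's invariance lemma). *)

section \<open>Endomorphisms of complex vector spaces\<close>

lemma funpow_invariant:
  assumes "\<forall>x\<in>U. T x \<in> U" "u \<in> U"
  shows "(T ^^ k) u \<in> U"
  by (induction k) (use assms in auto)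

locale complex_vector_space = vector_space scale
  for scale :: "complex \<Rightarrow> 'b::ab_group_add \<Rightarrow> 'b" (infixr \<open>*s\<close> 75)
begin

abbreviation endomorphism :: "('b \<Rightarrow> 'b) \<Rightarrow> bool" where
  "endomorphism T \<equiv> Vector_Spaces.linear (*s) (*s) T"

lemma endomorphism_image_span_subset:
  assumes "endomorphism T" "subspace U" "T ` S \<subseteq> U"
  shows "T ` span S \<subseteq> U"
proof -
  interpret T: module_hom "(*s)" "(*s)" T
    using assms(1) by (simp add: linear_iff_module_hom)
  show ?thesis
    using T.span_image[of S] span_minimal[OF assms(3,2)] by simp
qed

lemma independent_if_not_in_span_of_predecessors:
  fixes f :: "nat \<Rightarrow> 'b" and n :: nat
  assumes "\<And>k. k < n \<Longrightarrow> f k \<notin> span (f ` {..<k})"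
  shows "independent (f ` {..<n}) \<and> inj_on f {..<n}"
  using assms
proof (induction n)
  case 0
  then show ?case by (simp add: independent_empty)
next
  case (Suc n)
  have IH: "independent (f ` {..<n}) \<and> inj_on f {..<n}"
    using Suc by simp
  have new: "f n \<notin> span (f ` {..<n})"
    using Suc.prems by simp
  then have "f n \<notin> f ` {..<n}"
    using span_base by metis
  moreover have "independent (insert (f n) (f ` {..<n}))"
    using IH new by (intro independent_insertI) auto
  ultimately show ?case
    using IH by (simp add: lessThan_Suc inj_on_insert)
qed

lemma krylov_basis:
  fixes T :: "'b \<Rightarrow> 'b"
  assumes "u \<noteq> 0" "finite B" "\<And>k. (T ^^ k) u \<in> span B"
  shows "\<exists>m\<ge>1. independent ((\<lambda>j. (T ^^ j) u) ` {..<m}) \<and> inj_on (\<lambda>j. (T ^^ j) u) {..<m}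
            \<and> (T ^^ m) u \<in> span ((\<lambda>j. (T ^^ j) u) ` {..<m})"
proof -
  define f where "f j = (T ^^ j) u" for j
  have "\<exists>k. f k \<in> span (f ` {..<k})"
  proof (rule ccontr)
    assume "\<not> ?thesis"
    then have indep: "independent (f ` {..<Suc (card B)}) \<and> inj_on f {..<Suc (card B)}"
      by (intro independent_if_not_in_span_of_predecessors) auto
    moreover have "f ` {..<Suc (card B)} \<subseteq> span B"
      using assms(3) by (auto simp: f_def)
    ultimately have "card (f ` {..<Suc (card B)}) \<le> card B"
      using independent_span_bound[OF assms(2)] by simp
    moreover have "card (f ` {..<Suc (card B)}) = Suc (card B)"
      using indep by (simp add: card_image)
    ultimately show False by simp
  qed
  then obtain m where m: "f m \<in> span (f ` {..<m})"
    and min: "\<And>k. k < m \<Longrightarrow> f k \<notin> span (f ` {..<k})"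
    unfolding exists_least_iff[of "\<lambda>k. f k \<in> span (f ` {..<k})"] by blast
  have "m \<noteq> 0"
  proof
    assume "m = 0"
    with m have "u \<in> span {}"
      by (simp add: f_def)
    with assms(1) show False
      by simp
  qed
  then show ?thesis
    using m independent_if_not_in_span_of_predecessors[OF min] unfolding f_def
    by (intro exI[of _ m]) simp
qed

lemma iterates_span_invariant:
  fixes T :: "'b \<Rightarrow> 'b"
  assumes "(T ^^ m) u \<in> span ((\<lambda>j. (T ^^ j) u) ` {..<m})" "b \<in> (\<lambda>j. (T ^^ j) u) ` {..<m}"
  shows "T b \<in> span ((\<lambda>j. (T ^^ j) u) ` {..<m})"
proof -
  obtain j where j: "j < m" "b = (T ^^ j) u"
    using assms(2) by blast
  then have "T b = (T ^^ Suc j) u"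
    by simp
  show ?thesis
  proof (cases "Suc j < m")
    case True
    then have "(T ^^ Suc j) u \<in> (\<lambda>j. (T ^^ j) u) ` {..<m}"
      by (intro image_eqI[of _ _ "Suc j"]) auto
    with \<open>T b = (T ^^ Suc j) u\<close> show ?thesis
      by (simp add: span_base)
  next
    case False
    with j have "Suc j = m"
      by simp
    with \<open>T b = (T ^^ Suc j) u\<close> assms(1) show ?thesis
      by simp
  qed
qed

definition poly_apply :: "('b \<Rightarrow> 'b) \<Rightarrow> complex poly \<Rightarrow> 'b \<Rightarrow> 'b" where
  "poly_apply T p u = (\<Sum>j\<le>degree p. coeff p j *s (T ^^ j) u)"

lemma poly_apply_eq_sum:
  assumes "degree p < N"
  shows "poly_apply T p u = (\<Sum>j<N. coeff p j *s (T ^^ j) u)"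
  unfolding poly_apply_def
  by (rule sum.mono_neutral_left) (use assms in \<open>auto simp: coeff_eq_0\<close>)

lemma poly_apply_linear_factor:
  assumes "endomorphism T"
  shows "poly_apply T ([:-r, 1:] * q) u = T (poly_apply T q u) - r *s poly_apply T q u"
proof -
  interpret T: module_hom "(*s)" "(*s)" T
    using assms by (simp add: linear_iff_module_hom)
  define N where "N = Suc (Suc (degree q))"
  have coeff_factor:
    "coeff ([:-r, 1:] * q) j = (if j = 0 then 0 else coeff q (j - 1)) - r * coeff q j" for j
    by (cases j) (auto simp: mult_pCons_left algebra_simps)
  have "degree ([:-r, 1:] * q) < N"
    using degree_mult_le[of "[:-r, 1:]" q] by (simp add: N_def)
  then have "poly_apply T ([:-r, 1:] * q) u = (\<Sum>j<N. coeff ([:-r, 1:] * q) j *s (T ^^ j) u)"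
    by (rule poly_apply_eq_sum)
  also have "\<dots> = (\<Sum>j<N. (if j = 0 then 0 else coeff q (j - 1)) *s (T ^^ j) u)
      - (\<Sum>j<N. (r * coeff q j) *s (T ^^ j) u)"
    unfolding coeff_factor scale_left_diff_distrib sum_subtractf by (rule refl)
  also have "(\<Sum>j<N. (if j = 0 then 0 else coeff q (j - 1)) *s (T ^^ j) u)
      = (\<Sum>j<Suc (degree q). coeff q j *s (T ^^ Suc j) u)"
    unfolding N_def sum.lessThan_Suc_shift by simp
  also have "\<dots> = T (poly_apply T q u)"
    by (simp add: poly_apply_def T.sum T.scale lessThan_Suc_atMost)
  also have "(\<Sum>j<N. (r * coeff q j) *s (T ^^ j) u) = r *s poly_apply T q u"
    by (simp add: poly_apply_eq_sum[of q N] N_def scale_sum_right del: sum.lessThan_Suc)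
  finally show ?thesis .
qed

lemma poly_apply_in_invariant:
  assumes "subspace U" "\<forall>x\<in>U. T x \<in> U" "u \<in> U"
  shows "poly_apply T p u \<in> U"
  unfolding poly_apply_def
  by (intro subspace_sum[OF assms(1)] subspace_scale[OF assms(1)] funpow_invariant[OF assms(2,3)])

text \<open>Split off a linear factor of \<open>p\<close> (fundamental theorem of algebra) and recurse
  until the remaining factor no longer kills \<open>u\<close>.\<close>
lemma eigenvector_if_poly_apply_eq_0:
  assumes "endomorphism T" "subspace U" "\<forall>x\<in>U. T x \<in> U" "u \<in> U" "u \<noteq> 0"
    and "p \<noteq> 0" "poly_apply T p u = 0"
  shows "\<exists>v\<in>U. v \<noteq> 0 \<and> (\<exists>c. T v = c *s v)"
  using assms(6,7)
proof (induction "degree p" arbitrary: p)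
  case 0
  then have "poly_apply T p u = coeff p 0 *s u" and "coeff p 0 \<noteq> 0"
    using leading_coeff_neq_0[of p] by (simp_all add: poly_apply_def)
  then show ?case using 0 assms(5) by simp
next
  case (Suc k)
  then have "\<not> constant (poly p)"
    using constant_degree[of p] by simp
  then obtain z where "poly p z = 0"
    using fundamental_theorem_of_algebra by blast
  then obtain q where pq: "p = [:-z, 1:] * q"
    by (metis dvdE poly_eq_0_iff_dvd)
  with Suc.prems have "q \<noteq> 0" by auto
  have "degree p = 1 + degree q"
    unfolding pq by (subst degree_mult_eq) (use \<open>q \<noteq> 0\<close> in auto)
  with Suc.hyps(2) have "k = degree q"
    by simp
  define v where "v = poly_apply T q u"
  have "v \<in> U"
    unfolding v_def by (rule poly_apply_in_invariant[OF assms(2,3,4)])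
  moreover have "T v = z *s v"
    using Suc.prems(2) poly_apply_linear_factor[OF assms(1), of z q u] pq by (simp add: v_def)
  ultimately show ?case
    using Suc.hyps(1)[OF \<open>k = degree q\<close> \<open>q \<noteq> 0\<close>] by (cases "v = 0") (auto simp: v_def)
qed

lemma eigenvector_exists:
  assumes "endomorphism T" "subspace U" "\<forall>x\<in>U. T x \<in> U" "U \<subseteq> span B" "finite B"
    and "u \<in> U" "u \<noteq> 0"
  shows "\<exists>v\<in>U. v \<noteq> 0 \<and> (\<exists>c. T v = c *s v)"
proof -
  have "(T ^^ k) u \<in> span B" for k
    using funpow_invariant[OF assms(3,6)] assms(4) by auto
  with krylov_basis[OF assms(7,5)] obtain m where
    inj: "inj_on (\<lambda>j. (T ^^ j) u) {..<m}" and
    dep: "(T ^^ m) u \<in> span ((\<lambda>j. (T ^^ j) u) ` {..<m})"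
    by blast
  then obtain a where a: "(\<Sum>v\<in>(\<lambda>j. (T ^^ j) u) ` {..<m}. a v *s v) = (T ^^ m) u"
    using span_finite[of "(\<lambda>j. (T ^^ j) u) ` {..<m}"] by auto
  then have Tm: "(T ^^ m) u = (\<Sum>j<m. a ((T ^^ j) u) *s (T ^^ j) u)"
    using sum.reindex[OF inj, of "\<lambda>v. a v *s v"] by simp
  define p where "p = monom 1 m - (\<Sum>j<m. monom (a ((T ^^ j) u)) j)"
  have coeff_p: "coeff p j = (if j = m then 1 else 0) - (if j < m then a ((T ^^ j) u) else 0)" for j
    unfolding p_def by (simp add: coeff_sum coeff_monom)
  then have "p \<noteq> 0"
    by (metis less_irrefl diff_zero coeff_0 zero_neq_one)
  have "degree p < Suc m"
    using coeff_p by (intro le_imp_less_Suc degree_le) auto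
  then have "poly_apply T p u = (\<Sum>j<Suc m. coeff p j *s (T ^^ j) u)"
    by (rule poly_apply_eq_sum)
  also have "\<dots> = (\<Sum>j<m. coeff p j *s (T ^^ j) u) + (T ^^ m) u"
    using coeff_p by simp
  also have "(\<Sum>j<m. coeff p j *s (T ^^ j) u) = (\<Sum>j<m. - (a ((T ^^ j) u) *s (T ^^ j) u))"
    using coeff_p by (intro sum.cong) auto
  also have "\<dots> = - (T ^^ m) u"
    by (simp add: Tm sum_negf)
  finally have "poly_apply T p u = 0"
    by simp
  then show ?thesis
    using eigenvector_if_poly_apply_eq_0[OF assms(1,2,3,6,7) \<open>p \<noteq> 0\<close>] by blast
qed

lemma common_eigenvector_exists:
  assumes "finite F" "\<forall>T\<in>F. endomorphism T" "subspace U" "U \<subseteq> span B" "finite B"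
    and "u \<in> U" "u \<noteq> 0" "\<forall>T\<in>F. \<forall>x\<in>U. T x \<in> U"
    and "\<forall>S\<in>F. \<forall>T\<in>F. \<forall>x\<in>U. S (T x) = T (S x)"
  shows "\<exists>v\<in>U. v \<noteq> 0 \<and> (\<forall>T\<in>F. \<exists>c. T v = c *s v)"
  using assms
proof (induction F arbitrary: U u rule: finite_induct)
  case empty
  then show ?case by blast
next
  case (insert T F)
  note lin = insert.prems(1) and U = insert.prems(2,3) and inv = insert.prems(7)
    and comm = insert.prems(8)
  obtain v c where v: "v \<in> U" "v \<noteq> 0" "T v = c *s v"
    using eigenvector_exists[of T U B u] insert.prems by blast
  define U' where "U' = {x \<in> U. T x = c *s x}"
  interpret T: module_hom "(*s)" "(*s)" T
    using lin by (simp add: linear_iff_module_hom)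
  have "subspace U'"
    using U(1) unfolding U'_def subspace_def
    by (simp add: T.add T.scale T.zero scale_right_distrib scale_left_commute)
  moreover have "S x \<in> U'" if "S \<in> F" "x \<in> U'" for S x
  proof -
    interpret S: module_hom "(*s)" "(*s)" S
      using lin \<open>S \<in> F\<close> by (simp add: linear_iff_module_hom)
    show ?thesis
      using that inv comm by (auto simp: U'_def S.scale)
  qed
  moreover have "v \<in> U'" "U' \<subseteq> span B"
    using v U(2) by (auto simp: U'_def)
  ultimately obtain w where "w \<in> U'" "w \<noteq> 0" "\<forall>S\<in>F. \<exists>c. S w = c *s w"
    using insert.IH[of U' v] insert.prems v(2) by (auto simp: U'_def)
  then show ?case
    by (auto simp: U'_def)
qed

definition trace_on :: "'b set \<Rightarrow> ('b \<Rightarrow> 'b) \<Rightarrow> complex" where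
  "trace_on B T = (\<Sum>b\<in>B. representation B (T b) b)"

lemma representation_endomorphism_image:
  assumes "finite B" "independent B" "endomorphism T" "\<forall>c\<in>B. T c \<in> span B" "v \<in> span B"
  shows "representation B (T v) b = (\<Sum>c\<in>B. representation B v c * representation B (T c) b)"
proof -
  interpret T: module_hom "(*s)" "(*s)" T
    using assms(3) by (simp add: linear_iff_module_hom)
  have "T v = T (\<Sum>c\<in>B. representation B v c *s c)"
    using sum_representation_eq[OF assms(2,5,1)] by simp
  also have "\<dots> = (\<Sum>c\<in>B. representation B v c *s T c)"
    by (simp add: T.sum T.scale)
  finally have "representation B (T v)
      = (\<lambda>b. \<Sum>c\<in>B. representation B (representation B v c *s T c) b)"
    using assms(4) by (simp add: representation_sum[OF assms(2)] span_scale)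
  then show ?thesis
    using assms(4) by (simp add: representation_scale[OF assms(2)])
qed

lemma trace_on_commutator:
  assumes "finite B" "independent B" "endomorphism S" "endomorphism T"
    and "\<forall>b\<in>B. S b \<in> span B" "\<forall>b\<in>B. T b \<in> span B"
  shows "trace_on B (\<lambda>x. S (T x) - T (S x)) = 0"
proof -
  have S_span: "S ` span B \<subseteq> span B"
    using assms(5) by (intro endomorphism_image_span_subset[OF assms(3) subspace_span]) auto
  have T_span: "T ` span B \<subseteq> span B"
    using assms(6) by (intro endomorphism_image_span_subset[OF assms(4) subspace_span]) auto
  have "trace_on B (\<lambda>x. S (T x))
      = (\<Sum>b\<in>B. \<Sum>c\<in>B. representation B (T b) c * representation B (S c) b)"
    unfolding trace_on_def using assms by (intro sum.cong refl representation_endomorphism_image) auto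
  also have "\<dots> = (\<Sum>c\<in>B. \<Sum>b\<in>B. representation B (S c) b * representation B (T b) c)"
    by (subst sum.swap) (simp add: mult.commute)
  also have "\<dots> = trace_on B (\<lambda>x. T (S x))"
    unfolding trace_on_def using assms
    by (intro sum.cong refl representation_endomorphism_image[symmetric]) auto
  finally have "trace_on B (\<lambda>x. S (T x)) = trace_on B (\<lambda>x. T (S x))" .
  moreover have "S (T b) \<in> span B" "T (S b) \<in> span B" if "b \<in> B" for b
    using that assms(5,6) S_span T_span by auto
  ultimately show ?thesis
    unfolding trace_on_def by (simp add: representation_diff[OF assms(2)] sum_subtractf)
qed

lemma trace_on_triangular:
  assumes "finite B" "independent B" "\<forall>b\<in>B. T b - c *s b \<in> span (B - {b})"
  shows "trace_on B T = of_nat (card B) * c"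
proof -
  have "representation B (T b) b = c" if "b \<in> B" for b
  proof -
    define d where "d = T b - c *s b"
    have d: "d \<in> span (B - {b})"
      using assms(3) that by (simp add: d_def)
    then have "representation B d b = representation (B - {b}) d b"
      using representation_extend[OF assms(2)] by auto
    also have "\<dots> = 0"
      using representation_ne_zero[of "B - {b}" d b] by auto
    finally have "representation B d b = 0" .
    moreover have "d \<in> span B"
      using d span_mono[of "B - {b}" B] by auto
    moreover have "c *s b \<in> span B"
      using that by (simp add: span_base span_scale)
    ultimately have "representation B (d + c *s b) b = c"
      using that by (simp add: representation_add[OF assms(2)] representation_scale[OF assms(2)]
          representation_basis[OF assms(2)] span_base)
    then show ?thesis
      by (simp add: d_def)
  qed
  then show ?thesis
    unfolding trace_on_def by simp
qed

lemma commutator_triangular_diagonal_eq_0: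
  assumes "finite B" "independent B" "B \<noteq> {}" "endomorphism S" "endomorphism T"
    and "\<forall>b\<in>B. S b \<in> span B" "\<forall>b\<in>B. T b \<in> span B"
    and "\<forall>b\<in>B. S (T b) - T (S b) - c *s b \<in> span (B - {b})"
  shows "c = 0"
proof -
  have "of_nat (card B) * c = 0"
    using trace_on_triangular[OF assms(1,2,8)] trace_on_commutator[OF assms(1,2,4-7)] by simp
  with assms(1,3) show ?thesis
    by simp
qed

lemma commutator_scalar_eq_0:
  assumes "subspace U" "U \<subseteq> span B" "finite B" "u \<in> U" "u \<noteq> 0"
    and "endomorphism S" "endomorphism T" "\<forall>x\<in>U. S x \<in> U" "\<forall>x\<in>U. T x \<in> U"
    and "\<forall>x\<in>U. S (T x) - T (S x) = c *s x"
  shows "c = 0"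
proof -
  obtain C where C: "C \<subseteq> U" "independent C" "U \<subseteq> span C"
    using maximal_independent_subset[of U] by blast
  have "finite C"
    using independent_span_bound[OF assms(3) C(2)] C(1) assms(2) by blast
  moreover have "C \<noteq> {}"
    using C(3) assms(4,5) by auto
  moreover have "span C = U"
    using C(1,3) span_minimal[OF C(1) assms(1)] span_superset by blast
  ultimately show ?thesis
    using C assms(6-10)
    by (intro commutator_triangular_diagonal_eq_0[of C S T]) (auto simp: span_zero)
qed

end

locale lie_algebra_module =
  fixes sg :: "complex \<Rightarrow> 'g::ab_group_add \<Rightarrow> 'g" and br :: "'g \<Rightarrow> 'g \<Rightarrow> 'g"
    and sv :: "complex \<Rightarrow> 'v::ab_group_add \<Rightarrow> 'v" and act :: "'g \<Rightarrow> 'v \<Rightarrow> 'v"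
  assumes lie_algebra: "lie_algebra sg br" and lie_module: "lie_module sg br sv act"
begin

sublocale G: complex_vector_space sg
  using lie_algebra by (simp add: lie_algebra_def complex_vector_space_def)

sublocale V: complex_vector_space sv
  using lie_module by (simp add: lie_module_def complex_vector_space_def)

lemma act_add_right: "act x (u + w) = act x u + act x w"
  using lie_module unfolding lie_module_def by (metis V.scale_one)

lemma act_scale_right: "act x (sv c u) = sv c (act x u)"
  using lie_module unfolding lie_module_def by (metis V.scale_zero_left add_0 V.scale_zero_right)

lemma endomorphism_act: "V.endomorphism (act x)"
  using lie_module by (simp add: Vector_Spaces.linear_iff lie_module_def act_add_right act_scale_right)

lemma act_zero_right: "act x 0 = 0"
  using act_scale_right[of x 0 0] by simp

lemma act_diff_right: "act x (u - w) = act x u - act x w"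
  by (metis act_add_right diff_add_cancel eq_diff_eq)

lemma act_add_left: "act (x + y) u = act x u + act y u"
  using lie_module unfolding lie_module_def by (metis G.scale_one V.scale_one)

lemma act_scale_left: "act (sg c x) u = sv c (act x u)"
  using lie_module unfolding lie_module_def
  by (metis G.scale_zero_left add_0 V.scale_zero_left add_0_right)

lemma act_zero_left: "act 0 u = 0"
  using act_scale_left[of 0 0 u] by simp

lemma act_bracket: "act (br x y) u = act x (act y u) - act y (act x u)"
  using lie_module unfolding lie_module_def by blast

lemma bracket_antisym: "br x y = - br y x"
proof -
  have add_left: "br (x + y) z = br x z + br y z" and add_right: "br z (x + y) = br z x + br z y"
    for x y z
    using lie_algebra unfolding lie_algebra_def by (metis G.scale_one)+
  have "br (x + y) (x + y) = br x x + br x y + (br y x + br y y)"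
    by (simp add: add_left add_right)
  then show ?thesis
    using lie_algebra unfolding lie_algebra_def by (simp add: eq_neg_iff_add_eq_0)
qed

lemma derived_series_Suc_shift:
  "derived_series sg br I (Suc n) = derived_series sg br (derived sg br I) n"
  by (induction n) simp_all

lemma bracket_in_derived: "x \<in> I \<Longrightarrow> y \<in> I \<Longrightarrow> br x y \<in> derived sg br I"
  unfolding derived_def by (rule G.span_base) blast

lemma derived_subset:
  assumes "G.subspace I" "\<forall>x\<in>I. \<forall>y\<in>I. br x y \<in> I"
  shows "derived sg br I \<subseteq> I"
  unfolding derived_def using assms by (intro G.span_minimal) auto

lemma subspace_scalar_action: "G.subspace {x. \<exists>c. act x w = sv c w}"
proof (rule G.subspaceI)
  show "0 \<in> {x. \<exists>c. act x w = sv c w}"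
    by (auto simp: act_zero_left intro: exI[of _ 0])
  show "x + y \<in> {x. \<exists>c. act x w = sv c w}"
    if "x \<in> {x. \<exists>c. act x w = sv c w}" "y \<in> {x. \<exists>c. act x w = sv c w}" for x y
    using that by (auto simp: act_add_left V.scale_left_distrib[symmetric])
  show "sg a x \<in> {x. \<exists>c. act x w = sv c w}" if "x \<in> {x. \<exists>c. act x w = sv c w}" for a x
    using that by (auto simp: act_scale_left)
qed

section \<open>Lie's theorem\<close>

definition weight_space :: "'g set \<Rightarrow> ('g \<Rightarrow> complex) \<Rightarrow> 'v set \<Rightarrow> 'v set" where
  "weight_space Q \<mu> W = {w \<in> W. \<forall>q\<in>Q. act q w = sv (\<mu> q) w}"

lemma subspace_weight_space:
  assumes "V.subspace W"
  shows "V.subspace (weight_space Q \<mu> W)"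
  using assms unfolding weight_space_def V.subspace_def
  by (simp add: act_zero_right act_add_right act_scale_right V.scale_right_distrib V.scale_left_commute)

lemma act_iterates_triangular:
  assumes Q: "\<forall>i\<in>Q. br x i \<in> Q" and weight: "\<forall>i\<in>Q. act i w = sv (\<mu> i) w" and "i \<in> Q"
  shows "act i ((act x ^^ k) w) - sv (\<mu> i) ((act x ^^ k) w)
    \<in> V.span ((\<lambda>j. (act x ^^ j) w) ` {..<k})"
  using \<open>i \<in> Q\<close>
proof (induction k arbitrary: i)
  case 0
  then show ?case
    using weight by (simp add: V.span_zero)
next
  case (Suc k)
  define f where "f j = (act x ^^ j) w" for j
  define K where "K = V.span (f ` {..<Suc k})"
  have "br x i \<in> Q"
    using Q Suc.prems by blast
  have span_sub: "V.span (f ` {..<k}) \<subseteq> K"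
    unfolding K_def by (intro V.span_mono) auto
  have fk: "f k \<in> K"
    unfolding K_def by (intro V.span_base) auto
  define d where "d = act i (f k) - sv (\<mu> i) (f k)"
  define d' where "d' = act (br x i) (f k) - sv (\<mu> (br x i)) (f k)"
  have "act x (f j) \<in> K" if "j < k" for j
  proof -
    have "act x (f j) = f (Suc j)"
      by (simp add: f_def)
    with that show ?thesis
      unfolding K_def by (auto intro: V.span_base)
  qed
  then have "act x ` f ` {..<k} \<subseteq> K"
    by auto
  then have "act x ` V.span (f ` {..<k}) \<subseteq> K"
    unfolding K_def by (intro V.endomorphism_image_span_subset[OF endomorphism_act V.subspace_span])
  moreover have "d \<in> V.span (f ` {..<k})"
    using Suc.IH[OF Suc.prems] by (simp add: d_def f_def)
  ultimately have "act x d \<in> K"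
    by blast
  moreover have "d' \<in> K"
    using Suc.IH[OF \<open>br x i \<in> Q\<close>] span_sub by (auto simp: d'_def f_def)
  moreover have "act i (f (Suc k)) - sv (\<mu> i) (f (Suc k)) = act x d - d' - sv (\<mu> (br x i)) (f k)"
    by (simp add: d_def d'_def f_def act_bracket act_diff_right act_scale_right algebra_simps)
  ultimately have "act i (f (Suc k)) - sv (\<mu> i) (f (Suc k)) \<in> K"
    using fk unfolding K_def by (simp add: V.span_diff V.span_scale)
  then show ?case
    by (simp add: K_def f_def)
qed

text \<open>On the span of the iterates of \<open>w\<close> under \<open>x\<close>, every
  \<open>q \<in> Q\<close> acts triangularly with diagonal \<open>\<mu> q\<close>. So \<open>br x q\<close> acts there as a commutator
  with constant diagonal \<open>\<mu> (br x q)\<close>, and that commutator has trace zero.\<close>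
lemma weight_bracket_eq_0:
  assumes Q: "\<forall>i\<in>Q. br x i \<in> Q" and "q \<in> Q"
    and weight: "\<forall>i\<in>Q. act i w = sv (\<mu> i) w" and "w \<noteq> 0"
    and "finite B" "\<And>k. (act x ^^ k) w \<in> V.span B"
  shows "\<mu> (br x q) = 0"
proof -
  define f where "f j = (act x ^^ j) w" for j
  obtain m where m: "m \<ge> 1" "V.independent (f ` {..<m})" "inj_on f {..<m}"
    "f m \<in> V.span (f ` {..<m})"
    using V.krylov_basis[of w B "act x"] assms(4-6) unfolding f_def by blast
  define K where "K = f ` {..<m}"
  have tri: "act i (f j) - sv (\<mu> i) (f j) \<in> V.span (f ` {..<j})" if "i \<in> Q" for i j
    using act_iterates_triangular[OF Q weight that] by (simp add: f_def)
  have x_K: "act x b \<in> V.span K" if "b \<in> K" for b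
    using V.iterates_span_invariant[where T="act x" and u=w] m(4) that by (simp add: K_def f_def)
  have q_K: "act q b \<in> V.span K" if "b \<in> K" for b
  proof -
    obtain j where j: "j < m" "b = f j"
      using \<open>b \<in> K\<close> by (auto simp: K_def)
    have "V.span (f ` {..<j}) \<subseteq> V.span K"
      using j by (auto simp: K_def intro!: V.span_mono)
    then have "act q b - sv (\<mu> q) b \<in> V.span K"
      using tri[OF \<open>q \<in> Q\<close>] j by blast
    moreover have "sv (\<mu> q) b \<in> V.span K"
      using that by (simp add: V.span_base V.span_scale)
    ultimately show ?thesis
      using V.span_add by fastforce
  qed
  have "act x (act q b) - act q (act x b) - sv (\<mu> (br x q)) b \<in> V.span (K - {b})" if "b \<in> K" for b
  proof -
    obtain j where j: "j < m" "b = f j"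
      using \<open>b \<in> K\<close> by (auto simp: K_def)
    have "f ` {..<j} \<subseteq> K - {b}"
      using j m(3) by (auto simp: K_def inj_on_eq_iff)
    then have "V.span (f ` {..<j}) \<subseteq> V.span (K - {b})"
      by (rule V.span_mono)
    then show ?thesis
      using tri[of "br x q" j] Q \<open>q \<in> Q\<close> j by (auto simp: act_bracket)
  qed
  moreover have "finite K" "K \<noteq> {}"
    using m(1) by (auto simp: K_def lessThan_empty_iff)
  ultimately show ?thesis
    using m(2) x_K q_K endomorphism_act unfolding K_def[symmetric]
    by (intro V.commutator_triangular_diagonal_eq_0[of K "act x" "act q"]) auto
qed

lemma weight_space_invariant:
  assumes ideal: "\<forall>x\<in>P. \<forall>i\<in>Q. br x i \<in> Q" and W: "\<forall>p\<in>P. \<forall>w\<in>W. act p w \<in> W"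
    and "W \<subseteq> V.span B" "finite B" "w0 \<in> weight_space Q \<mu> W" "w0 \<noteq> 0"
    and "x \<in> P" "w \<in> weight_space Q \<mu> W"
  shows "act x w \<in> weight_space Q \<mu> W"
proof -
  have "(act x ^^ k) w0 \<in> V.span B" for k
    using funpow_invariant[of W "act x" w0 k] W assms(3,5,7) by (auto simp: weight_space_def)
  then have bracket: "\<mu> (br x q) = 0" if "q \<in> Q" for q
    using weight_bracket_eq_0[of Q x q w0 \<mu> B] ideal that assms(4-7) by (auto simp: weight_space_def)
  have "act q (act x w) = sv (\<mu> q) (act x w)" if "q \<in> Q" for q
  proof -
    have "act (br x q) w = act x (act q w) - act q (act x w)"
      by (rule act_bracket)
    moreover have "act (br x q) w = 0" "act q w = sv (\<mu> q) w"
      using assms(8) ideal \<open>x \<in> P\<close> that bracket[OF that] by (auto simp: weight_space_def)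
    ultimately show ?thesis
      by (simp add: act_scale_right)
  qed
  with assms(7,8) W show ?thesis
    by (auto simp: weight_space_def)
qed

lemma act_commute_if_bracket_scalar:
  assumes "V.subspace E" "E \<subseteq> V.span B" "finite B" "w \<in> E" "w \<noteq> 0"
    and "\<forall>e\<in>E. act x e \<in> E" "\<forall>e\<in>E. act y e \<in> E" "\<forall>e\<in>E. act (br x y) e = sv c e"
    and "e \<in> E"
  shows "act x (act y e) = act y (act x e)"
proof -
  have scalar: "\<forall>e\<in>E. act x (act y e) - act y (act x e) = sv c e"
    using assms(8) by (simp add: act_bracket)
  then have "c = 0"
    using V.commutator_scalar_eq_0[OF assms(1-5) endomorphism_act endomorphism_act assms(6,7)] by blast
  with scalar assms(9) show ?thesis
    by simp
qed

lemma common_eigenvector_if_commuting: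
  assumes "finite Bg" "P \<subseteq> G.span Bg"
    and "V.subspace E" "E \<subseteq> V.span B" "finite B" "w \<in> E" "w \<noteq> 0"
    and invariant: "\<forall>p\<in>P. \<forall>e\<in>E. act p e \<in> E"
    and commute: "\<forall>p1\<in>P. \<forall>p2\<in>P. \<forall>e\<in>E. act p1 (act p2 e) = act p2 (act p1 e)"
  shows "\<exists>e\<in>E. e \<noteq> 0 \<and> (\<forall>p\<in>P. \<exists>c. act p e = sv c e)"
proof -
  obtain Bp where Bp: "Bp \<subseteq> P" "G.independent Bp" "P \<subseteq> G.span Bp"
    using G.maximal_independent_subset[of P] by blast
  have "finite Bp"
    using G.independent_span_bound[OF assms(1) Bp(2)] Bp(1) assms(2) by blast
  moreover have "\<forall>T\<in>act ` Bp. V.endomorphism T"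
    using endomorphism_act by blast
  moreover have "\<forall>T\<in>act ` Bp. \<forall>x\<in>E. T x \<in> E"
    using invariant Bp(1) by blast
  moreover have "\<forall>S\<in>act ` Bp. \<forall>T\<in>act ` Bp. \<forall>x\<in>E. S (T x) = T (S x)"
    using commute Bp(1) by blast
  ultimately obtain e where e: "e \<in> E" "e \<noteq> 0" "\<forall>T\<in>act ` Bp. \<exists>c. T e = sv c e"
    using V.common_eigenvector_exists[of "act ` Bp" E B w] assms(3-7) by blast
  have "G.span Bp \<subseteq> {x. \<exists>c. act x e = sv c e}"
    using e(3) by (intro G.span_minimal subspace_scalar_action) auto
  with Bp(3) e(1,2) show ?thesis
    by auto
qed

text \<open>Induction on the derived length: the derived algebra \<open>Q\<close> has a common eigenvector with
  weight \<open>\<mu>\<close>; the weight space of \<open>\<mu>\<close> is \<open>P\<close>-stable, and every bracket acts on it by a scalar,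
  so \<open>P\<close> acts there by commuting endomorphisms.\<close>
lemma lie_theorem:
  assumes "finite Bg" "P \<subseteq> G.span Bg" "G.subspace P" "\<forall>x\<in>P. \<forall>y\<in>P. br x y \<in> P"
    and "derived_series sg br P n = {0}"
    and "V.subspace W" "W \<subseteq> V.span B" "finite B" "w0 \<in> W" "w0 \<noteq> 0"
    and "\<forall>p\<in>P. \<forall>w\<in>W. act p w \<in> W"
  shows "\<exists>w\<in>W. w \<noteq> 0 \<and> (\<forall>p\<in>P. \<exists>c. act p w = sv c w)"
  using assms(2-)
proof (induction n arbitrary: P W w0)
  case 0
  then show ?case
    by (auto simp: act_zero_left intro: exI[of _ 0])
next
  case (Suc n)
  note P = Suc.prems(1-3) and W = Suc.prems(5-10)
  define Q where "Q = derived sg br P"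
  have "Q \<subseteq> P"
    unfolding Q_def using P(2,3) by (rule derived_subset)
  have ideal: "\<forall>x\<in>P. \<forall>i\<in>Q. br x i \<in> Q"
    using \<open>Q \<subseteq> P\<close> by (auto simp: Q_def intro: bracket_in_derived)
  have Q: "Q \<subseteq> G.span Bg" "G.subspace Q" "\<forall>x\<in>Q. \<forall>y\<in>Q. br x y \<in> Q"
    "derived_series sg br Q n = {0}" "\<forall>p\<in>Q. \<forall>w\<in>W. act p w \<in> W"
    using \<open>Q \<subseteq> P\<close> P(1) ideal Suc.prems(4) W(6)
    by (auto simp only: Q_def derived_def derived_series_Suc_shift G.subspace_span)
  then obtain w1 where w1: "w1 \<in> W" "w1 \<noteq> 0" "\<forall>q\<in>Q. \<exists>c. act q w1 = sv c w1"
    using Suc.IH[OF Q(1-4) W(1-5) Q(5)] by blast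
  obtain \<mu> where "\<forall>q\<in>Q. act q w1 = sv (\<mu> q) w1"
    using bchoice[OF w1(3)] by blast
  define E where "E = weight_space Q \<mu> W"
  have E: "V.subspace E" "E \<subseteq> V.span B" "w1 \<in> E"
    using subspace_weight_space[OF W(1)] W(2) w1(1) \<open>\<forall>q\<in>Q. act q w1 = sv (\<mu> q) w1\<close>
    by (auto simp: E_def weight_space_def)
  have E_invariant: "\<forall>p\<in>P. \<forall>e\<in>E. act p e \<in> E"
    using weight_space_invariant[OF ideal W(6,2,3)] E(3) w1(2) by (simp add: E_def)
  have "\<forall>p1\<in>P. \<forall>p2\<in>P. \<forall>e\<in>E. act p1 (act p2 e) = act p2 (act p1 e)"
  proof (intro ballI)
    fix p1 p2 e assume "p1 \<in> P" "p2 \<in> P" "e \<in> E"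
    then have "br p1 p2 \<in> Q"
      unfolding Q_def by (intro bracket_in_derived)
    then have "\<forall>e\<in>E. act (br p1 p2) e = sv (\<mu> (br p1 p2)) e"
      by (simp add: E_def weight_space_def)
    with E w1(2) W(3) E_invariant \<open>p1 \<in> P\<close> \<open>p2 \<in> P\<close> \<open>e \<in> E\<close>
    show "act p1 (act p2 e) = act p2 (act p1 e)"
      by (intro act_commute_if_bracket_scalar[of E B w1 p1 p2]) auto
  qed
  then obtain e where "e \<in> E" "e \<noteq> 0" "\<forall>p\<in>P. \<exists>c. act p e = sv c e"
    using common_eigenvector_if_commuting[OF \<open>finite Bg\<close> P(1) E(1,2) W(3) E(3) w1(2) E_invariant]
    by blast
  then show ?case
    by (auto simp: E_def weight_space_def)
qed

section \<open>Quasi-Whittaker modules\<close>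

lemma lie_hom_to_C_if_eigenvalues:
  assumes "G.subspace P" "\<forall>x\<in>P. \<forall>y\<in>P. br x y \<in> P" "w \<noteq> 0"
    and eigen: "\<forall>p\<in>P. act p w = sv (\<phi> p) w"
  shows "lie_hom_to_C sg br P \<phi>"
proof -
  have linear: "\<phi> (sg a x + sg b y) = a * \<phi> x + b * \<phi> y" if "x \<in> P" "y \<in> P" for a b x y
  proof -
    have "sg a x + sg b y \<in> P"
      using assms(1) that by (simp add: G.subspace_add G.subspace_scale)
    then have "sv (\<phi> (sg a x + sg b y)) w = act (sg a x + sg b y) w"
      using eigen by simp
    also have "\<dots> = sv (a * \<phi> x + b * \<phi> y) w"
      using eigen that by (simp add: act_add_left act_scale_left V.scale_left_distrib)
    finally show ?thesis
      using \<open>w \<noteq> 0\<close> by simp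
  qed
  define Z where "Z = {z \<in> P. \<phi> z = 0}"
  have "G.subspace Z"
  proof (rule G.subspaceI)
    show "0 \<in> Z"
      using linear[of 0 0 0 0] assms(1) by (simp add: Z_def G.subspace_0)
    show "x + y \<in> Z" if "x \<in> Z" "y \<in> Z" for x y
      using that linear[of x y 1 1] assms(1) by (simp add: Z_def G.subspace_add)
    show "sg c x \<in> Z" if "x \<in> Z" for c x
      using that linear[of x x c 0] assms(1) by (simp add: Z_def G.subspace_scale)
  qed
  moreover have "br x y \<in> Z" if "x \<in> P" "y \<in> P" for x y
  proof -
    have "br x y \<in> P"
      using assms(2) that by blast
    then have "sv (\<phi> (br x y)) w = act (br x y) w"
      using eigen by simp
    also have "\<dots> = 0"
      using eigen that by (simp add: act_bracket act_scale_right)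
    finally show ?thesis
      using \<open>br x y \<in> P\<close> \<open>w \<noteq> 0\<close> by (simp add: Z_def)
  qed
  ultimately have "derived sg br P \<subseteq> Z"
    unfolding derived_def by (intro G.span_minimal) auto
  with linear show ?thesis
    by (auto simp: lie_hom_to_C_def Z_def)
qed

lemma generates_if_irreducible:
  assumes "irreducible_module sv act" "w \<noteq> 0"
  shows "generates sv act w"
  using assms unfolding irreducible_module_def generates_def by blast

lemma quasi_whittaker_if_locally_finite:
  assumes "finite Bg" "G.span Bg = UNIV" "lie_ideal sg br P" "solvable sg br P"
    and "irreducible_module sv act" "locally_finite sv act P"
  shows "quasi_whittaker_module sg br sv act P"
proof -
  obtain v :: 'v where "v \<noteq> 0"
    using assms(5) unfolding irreducible_module_def by auto
  then obtain W where W: "v \<in> W" "submodule sv act P W" "fin_dim_subspace sv W"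
    using assms(6) unfolding locally_finite_def by blast
  then obtain B where "finite B" "V.span B = W"
    unfolding fin_dim_subspace_def by blast
  have P: "G.subspace P" "\<forall>x\<in>P. \<forall>y\<in>P. br x y \<in> P"
    using assms(3) unfolding lie_ideal_def by auto
  obtain n where n: "derived_series sg br P n = {0}"
    using assms(4) unfolding solvable_def by blast
  have "P \<subseteq> G.span Bg" "W \<subseteq> V.span B"
    by (simp_all add: assms(2) \<open>V.span B = W\<close>)
  moreover have "V.subspace W" "\<forall>p\<in>P. \<forall>w\<in>W. act p w \<in> W"
    using W(2) unfolding submodule_def by auto
  ultimately obtain w where w: "w \<noteq> 0" "\<forall>p\<in>P. \<exists>c. act p w = sv c w"
    using lie_theorem[OF assms(1) _ P n _ _ \<open>finite B\<close> W(1) \<open>v \<noteq> 0\<close>] by blast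
  then obtain \<phi> where "\<forall>p\<in>P. act p w = sv (\<phi> p) w"
    by (metis bchoice)
  with w P assms(5) show ?thesis
    unfolding quasi_whittaker_module_def quasi_whittaker_vector_def
    by (blast intro: lie_hom_to_C_if_eigenvalues generates_if_irreducible)
qed

primrec word_vectors :: "'g set \<Rightarrow> 'v \<Rightarrow> nat \<Rightarrow> 'v set" where
  "word_vectors B v 0 = {v}"
| "word_vectors B v (Suc n) = word_vectors B v n \<union> (\<lambda>(b, u). act b u) ` (B \<times> word_vectors B v n)"

lemma finite_word_vectors: "finite B \<Longrightarrow> finite (word_vectors B v n)"
  by (induction n) auto

lemma span_word_vectors_mono:
  assumes "m \<le> n"
  shows "V.span (word_vectors B v m) \<subseteq> V.span (word_vectors B v n)"
proof (rule lift_Suc_mono_le[OF _ assms])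
  show "V.span (word_vectors B v k) \<subseteq> V.span (word_vectors B v (Suc k))" for k
    by (rule V.span_mono) auto
qed

lemma act_span_word_vectors_generator:
  assumes "b \<in> B" "u \<in> V.span (word_vectors B v n)"
  shows "act b u \<in> V.span (word_vectors B v (Suc n))"
proof -
  have "act b ` word_vectors B v n \<subseteq> V.span (word_vectors B v (Suc n))"
    using assms(1) by (auto intro!: V.span_base)
  then show ?thesis
    using V.endomorphism_image_span_subset[OF endomorphism_act V.subspace_span] assms(2) by blast
qed

lemma act_span_word_vectors:
  assumes "G.span B = UNIV" "u \<in> V.span (word_vectors B v n)"
  shows "act x u \<in> V.span (word_vectors B v (Suc n))"
proof -
  let ?A = "{x. act x u \<in> V.span (word_vectors B v (Suc n))}"
  have "G.subspace ?A"
    by (rule G.subspaceI) (simp_all add: act_zero_left act_add_left act_scale_left V.span_zero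
        V.span_add V.span_scale)
  moreover have "B \<subseteq> ?A"
    using act_span_word_vectors_generator assms(2) by blast
  ultimately show ?thesis
    using G.span_minimal assms(1) by blast
qed

text \<open>An element of the ideal \<open>P\<close> moves past a generator \<open>b\<close> at the cost of the bracket
  \<open>br p b \<in> P\<close>, and acts on \<open>v\<close> by a scalar; so it does not increase word length.\<close>
lemma ideal_act_span_word_vectors:
  assumes "lie_ideal sg br P" "\<forall>p\<in>P. act p v = sv (\<phi> p) v" "p \<in> P"
    and "u \<in> V.span (word_vectors B v n)"
  shows "act p u \<in> V.span (word_vectors B v n)"
proof -
  have P: "G.subspace P" "\<And>x y. y \<in> P \<Longrightarrow> br x y \<in> P"
    using assms(1) unfolding lie_ideal_def by auto
  have bracket_in_P: "br y x \<in> P" if "y \<in> P" for x y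
  proof -
    have "- br x y \<in> P"
      using G.subspace_neg[OF P(1) P(2)[OF that]] .
    then show ?thesis
      by (simp add: bracket_antisym[of y x])
  qed
  have "\<forall>p\<in>P. \<forall>s\<in>word_vectors B v n. act p s \<in> V.span (word_vectors B v n)"
  proof (induction n)
    case 0
    show ?case
      using assms(2) by (auto intro: V.span_scale V.span_base)
  next
    case (Suc n)
    have mono: "V.span (word_vectors B v n) \<subseteq> V.span (word_vectors B v (Suc n))"
      by (rule span_word_vectors_mono) simp
    show ?case
    proof (intro ballI)
      fix p s assume "p \<in> P" "s \<in> word_vectors B v (Suc n)"
      then consider "s \<in> word_vectors B v n"
        | b t where "b \<in> B" "t \<in> word_vectors B v n" "s = act b t"
        by auto
      then show "act p s \<in> V.span (word_vectors B v (Suc n))"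
      proof cases
        case 1
        then show ?thesis
          using Suc.IH \<open>p \<in> P\<close> mono by blast
      next
        case 2
        have "act p (act b t) = act b (act p t) + act (br p b) t"
          by (simp add: act_bracket)
        moreover have "act b (act p t) \<in> V.span (word_vectors B v (Suc n))"
          using Suc.IH \<open>p \<in> P\<close> 2(1,2) by (blast intro: act_span_word_vectors_generator)
        moreover have "act (br p b) t \<in> V.span (word_vectors B v (Suc n))"
          using Suc.IH bracket_in_P[OF \<open>p \<in> P\<close>] 2(2) mono by blast
        ultimately show ?thesis
          using 2(3) by (simp add: V.span_add)
      qed
    qed
  qed
  then show ?thesis
    using V.endomorphism_image_span_subset[OF endomorphism_act V.subspace_span] assms(3,4) by blast
qed

lemma span_word_vectors_exhaust:
  assumes "G.span B = UNIV" "generates sv act v"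
  shows "\<exists>n. u \<in> V.span (word_vectors B v n)"
proof -
  define U where "U = (\<Union>n. V.span (word_vectors B v n))"
  have "V.subspace U"
  proof (rule V.subspaceI)
    show "0 \<in> U"
      by (auto simp: U_def V.span_zero)
    show "x + y \<in> U" if "x \<in> U" "y \<in> U" for x y
    proof -
      obtain i where "x \<in> V.span (word_vectors B v i)"
        using \<open>x \<in> U\<close> unfolding U_def by blast
      moreover obtain j where "y \<in> V.span (word_vectors B v j)"
        using \<open>y \<in> U\<close> unfolding U_def by blast
      ultimately have "x \<in> V.span (word_vectors B v (max i j))"
        and "y \<in> V.span (word_vectors B v (max i j))"
        using span_word_vectors_mono[of i "max i j" B v] span_word_vectors_mono[of j "max i j" B v]
        by auto
      then show ?thesis
        by (auto simp: U_def intro: V.span_add)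
    qed
    show "sv c x \<in> U" if "x \<in> U" for c x
      using that by (auto simp: U_def intro: V.span_scale)
  qed
  moreover have "\<forall>x. \<forall>w\<in>U. act x w \<in> U"
    using act_span_word_vectors[OF assms(1)] unfolding U_def by blast
  moreover have "v \<in> U"
    by (auto simp: U_def intro!: exI[of _ 0] V.span_base)
  ultimately have "U = UNIV"
    using assms(2) unfolding generates_def submodule_def by blast
  then show ?thesis
    by (auto simp: U_def)
qed

lemma locally_finite_if_quasi_whittaker:
  assumes "finite B" "G.span B = UNIV" "lie_ideal sg br P" "quasi_whittaker_module sg br sv act P"
  shows "locally_finite sv act P"
  unfolding locally_finite_def
proof
  fix u
  obtain \<phi> v where v: "\<forall>p\<in>P. act p v = sv (\<phi> p) v" "generates sv act v"
    using assms(4) unfolding quasi_whittaker_module_def quasi_whittaker_vector_def by blast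
  then obtain n where "u \<in> V.span (word_vectors B v n)"
    using span_word_vectors_exhaust[OF assms(2)] by blast
  moreover have "submodule sv act P (V.span (word_vectors B v n))"
    unfolding submodule_def
    using V.subspace_span ideal_act_span_word_vectors[OF assms(3) v(1)] by simp
  moreover have "fin_dim_subspace sv (V.span (word_vectors B v n))"
    unfolding fin_dim_subspace_def
    by (intro exI[of _ "word_vectors B v n"]) (simp add: finite_word_vectors assms(1) V.span_superset)
  ultimately show "\<exists>W. u \<in> W \<and> submodule sv act P W \<and> fin_dim_subspace sv W"
    by blast
qed

end

theorem theorem2p5:
  fixes sg :: "complex \<Rightarrow> 'g::ab_group_add \<Rightarrow> 'g"
    and br :: "'g \<Rightarrow> 'g \<Rightarrow> 'g"
    and sv :: "complex \<Rightarrow> 'v::ab_group_add \<Rightarrow> 'v"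
    and act :: "'g \<Rightarrow> 'v \<Rightarrow> 'v"
    and P :: "'g set"
  assumes "lie_algebra sg br"
    and "fin_dim_subspace sg (UNIV :: 'g set)"
    and "\<not> semisimple sg br"
    and "lie_ideal sg br P"
    and "solvable sg br P"
    and "\<not> perfect sg br P"
    and "lie_module sg br sv act"
    and "irreducible_module sv act"
  shows "locally_finite sv act P \<longleftrightarrow> quasi_whittaker_module sg br sv act P"
proof -
  interpret lie_algebra_module sg br sv act
    using assms(1,7) by unfold_locales
  obtain B where B: "finite B" "G.span B = UNIV"
    using assms(2) unfolding fin_dim_subspace_def by blast
  show ?thesis
    using quasi_whittaker_if_locally_finite[OF B assms(4,5,8)]
      locally_finite_if_quasi_whittaker[OF B assms(4)] by blast
qed

end
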